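(* For every $\alpha\in(0,1)$ and $\delta>0$, $$L(\alpha;\delta)>\frac4\delta\Big(1-\frac{\pi^2}{16}-\frac12\alpha^2\Big).$$
   Context: For $s\ge0$ let $\phi_1(s)=\int_0^{\pi/2}\frac{\sin^2\theta}{(\sin^2\theta+s^2)^{1/2}}d\theta$ (strictly decreasing from $1$ to $0$, inverse $\phi_1^{-1}:(0,1]\to[0,\infty)$) and $\phi_2(s)=\int_0^{\pi/2}\frac{2\sin^2\theta+s^2}{(\sin^2\theta+s^2)^{1/2}}d\theta$. For $\alpha\in(0,1)$, $\delta>0$: $L(\alpha;\delta)=\frac4\delta\Big(1-\frac{\phi_2^2(\phi_1^{-1}(\alpha))}{4[1+(\phi_1^{-1}(\alpha))^2]}\Big)$. *)

theory Defs
  imports "HOL-Analysis.Analysis"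
begin

definition phi1 :: "real \<Rightarrow> real" where
  "phi1 s = integral {0..pi/2} (\<lambda>\<theta>. (sin \<theta>)^2 / sqrt ((sin \<theta>)^2 + s^2))"

definition phi2 :: "real \<Rightarrow> real" where
  "phi2 s = integral {0..pi/2} (\<lambda>\<theta>. (2 * (sin \<theta>)^2 + s^2) / sqrt ((sin \<theta>)^2 + s^2))"

text \<open>Inverse of phi1 restricted to [0,\<infinity>); phi1 is strictly decreasing there from 1 to 0.\<close>
definition phi1_inv :: "real \<Rightarrow> real" where
  "phi1_inv a = (THE s. s \<ge> 0 \<and> phi1 s = a)"

definition L :: "real \<Rightarrow> real \<Rightarrow> real" where
  "L \<alpha> \<delta> = 4 / \<delta> * (1 - (phi2 (phi1_inv \<alpha>))^2 / (4 * (1 + (phi1_inv \<alpha>)^2)))"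

end

theory Submission
  imports Defs
begin

text \<open>Splitting off \<open>phi1\<close> gives \<open>phi2 s = phiE s + phi1 s\<close>, where \<open>phiE s\<close> integrates
\<open>sqrt (sin\<^sup>2 \<theta> + s\<^sup>2)\<close> over \<open>[0, \<pi>/2]\<close>. The mean of \<open>sin\<^sup>2 \<theta> + s\<^sup>2\<close> there is
\<open>c\<^sup>2 = 1/2 + s\<^sup>2\<close>, so integrating the tangent-line bound \<open>sqrt y \<le> (y + c\<^sup>2) / (2c)\<close>
(strict away from \<open>y = c\<^sup>2\<close>) yields \<open>phiE s < \<pi>/2 \<cdot> c\<close>. With \<open>P = 1 + 2s\<^sup>2\<close> the weighted
inequality \<open>(E + a)\<^sup>2 \<le> (1 + 1/P) E\<^sup>2 + (1 + P) a\<^sup>2\<close> turns this into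
\<open>phi2\<^sup>2 / (4(1 + s\<^sup>2)) < \<pi>\<^sup>2/16 + phi1\<^sup>2 / 2\<close>, which at \<open>s = phi1_inv \<alpha>\<close> is the claim.
That inverse exists because \<open>phi1\<close> is continuous (even \<open>\<pi>/2\<close>-Lipschitz), strictly
decreasing on \<open>[0, \<infinity>)\<close>, equal to 1 at 0 and at most \<open>\<pi>/(4s)\<close>.\<close>

lemma has_integral_sin_0_pi_half: "(sin has_integral 1) {0..pi/2}"
proof -
  have "(sin has_integral (- cos (pi/2)) - (- cos 0)) {0..pi/2}"
    by (rule fundamental_theorem_of_calculus)
      (auto intro!: derivative_eq_intros simp: has_real_derivative_iff_has_vector_derivative[symmetric])
  then show ?thesis by simp
qed

lemma has_integral_sin_squared_0_pi_half: "((\<lambda>\<theta>. sin \<theta> ^ 2) has_integral pi/4) {0..pi/2}"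
proof -
  have "((\<lambda>\<theta>. sin \<theta> ^ 2) has_integral
      ((pi/2)/2 - sin (2*(pi/2))/4) - (0/2 - sin (2*0)/4)) {0..pi/2}"
  proof (rule fundamental_theorem_of_calculus)
    fix x :: real
    have "((\<lambda>\<theta>. \<theta>/2 - sin (2*\<theta>) / 4) has_real_derivative (1 - cos (2*x)) / 2) (at x)"
      by (auto intro!: derivative_eq_intros)
    then show "((\<lambda>\<theta>. \<theta>/2 - sin (2*\<theta>) / 4) has_vector_derivative sin x ^ 2) (at x within {0..pi/2})"
      by (simp add: cos_double_sin has_real_derivative_iff_has_vector_derivative[symmetric] has_field_derivative_at_within)
  qed simp
  then show ?thesis by simp
qed

lemma integral_pos_real:
  fixes f :: "real \<Rightarrow> real"
  assumes "continuous_on {a..b} f" "a < b" "\<And>x. x \<in> {a..b} \<Longrightarrow> 0 \<le> f x"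
    and "z \<in> {a..b}" "f z \<noteq> 0"
  shows "0 < integral {a..b} f"
proof -
  have "0 \<le> integral {a..b} f"
    using assms(1,3) by (intro integral_nonneg integrable_continuous_interval)
  moreover have "integral {a..b} f \<noteq> 0"
    using integral_eq_0_iff[OF assms(1-3)] assms(4,5) by blast
  ultimately show ?thesis by linarith
qed

lemma continuous_on_phi1_integrand:
  "continuous_on A (\<lambda>\<theta>. sin \<theta> ^ 2 / sqrt (sin \<theta> ^ 2 + s ^ 2))"
proof (cases "s = 0")
  case True
  have "sin \<theta> ^ 2 / sqrt (sin \<theta> ^ 2) = \<bar>sin \<theta>\<bar>" for \<theta>
    by (cases "sin \<theta> = 0") (simp_all add: real_sqrt_abs power2_eq_square divide_simps)
  then show ?thesis using True by (simp add: continuous_intros)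
next
  case False
  then show ?thesis by (intro continuous_intros) (auto simp: add_nonneg_pos)
qed

lemma phi1_integrand_integrable:
  "(\<lambda>\<theta>. sin \<theta> ^ 2 / sqrt (sin \<theta> ^ 2 + s ^ 2)) integrable_on {0..pi/2}"
  by (rule integrable_continuous_interval, rule continuous_on_phi1_integrand)

lemma sqrt_sum_squares_diff_le: "\<bar>sqrt (u^2 + s^2) - sqrt (u^2 + t^2)\<bar> \<le> \<bar>s - t\<bar>"
  using real_sqrt_sum_squares_triangle_ineq[of u 0 t "s - t"]
    real_sqrt_sum_squares_triangle_ineq[of u 0 s "t - s"]
  by (simp add: abs_le_iff power2_commute)

lemma square_div_sqrt_sum_squares_lipschitz:
  fixes u s t :: real
  shows "\<bar>u^2 / sqrt (u^2 + s^2) - u^2 / sqrt (u^2 + t^2)\<bar> \<le> \<bar>s - t\<bar>"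
proof (cases "u = 0")
  case False
  define a b where "a = sqrt (u^2 + s^2)" and "b = sqrt (u^2 + t^2)"
  have ua: "\<bar>u\<bar> \<le> a" and ub: "\<bar>u\<bar> \<le> b"
    unfolding a_def b_def by (metis real_sqrt_abs real_sqrt_le_mono le_add_same_cancel1 zero_le_power2)+
  have "u^2 \<le> a * b"
    using mult_mono[OF ua ub] ua by (simp add: power2_eq_square)
  have "0 < a" "0 < b"
    using False ua ub by auto
  then have "0 < a * b" "u^2 / a - u^2 / b = u^2 / (a * b) * (b - a)"
    by (simp_all add: field_simps)
  then have "\<bar>u^2 / a - u^2 / b\<bar> = u^2 / (a * b) * \<bar>b - a\<bar>"
    by (simp only: abs_mult) simp
  also have "\<dots> \<le> 1 * \<bar>b - a\<bar>"
    using \<open>u^2 \<le> a * b\<close> \<open>0 < a * b\<close> by (intro mult_right_mono) auto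
  also have "\<dots> \<le> \<bar>s - t\<bar>"
    using sqrt_sum_squares_diff_le[of u t s] unfolding a_def b_def by (simp add: abs_minus_commute)
  finally show ?thesis unfolding a_def b_def .
qed simp

lemma phi1_lipschitz: "\<bar>phi1 s - phi1 t\<bar> \<le> pi/2 * \<bar>s - t\<bar>"
proof -
  have "phi1 s - phi1 t = integral {0..pi/2}
      (\<lambda>\<theta>. sin \<theta>^2 / sqrt (sin \<theta>^2 + s^2) - sin \<theta>^2 / sqrt (sin \<theta>^2 + t^2))"
    unfolding phi1_def by (simp add: integral_diff phi1_integrand_integrable)
  also have "\<bar>\<dots>\<bar> \<le> integral {0..pi/2} (\<lambda>\<theta>. \<bar>s - t\<bar>)"
    by (rule integral_norm_bound_integral[where 'n=real and 'a=real, unfolded real_norm_def])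
      (auto intro!: integrable_diff phi1_integrand_integrable square_div_sqrt_sum_squares_lipschitz)
  also have "\<dots> = pi/2 * \<bar>s - t\<bar>"
    by simp
  finally show ?thesis .
qed

lemma continuous_on_phi1: "continuous_on A phi1"
proof (rule lipschitz_on_continuous_on)
  show "(pi/2)-lipschitz_on A phi1"
    unfolding lipschitz_on_def dist_real_def using phi1_lipschitz by simp
qed

lemma phi1_0: "phi1 0 = 1"
proof -
  have "phi1 0 = integral {0..pi/2} sin"
    unfolding phi1_def
  proof (rule integral_cong)
    fix \<theta> :: real assume "\<theta> \<in> {0..pi/2}"
    then have "0 \<le> sin \<theta>" by (intro sin_ge_zero) auto
    then show "sin \<theta>^2 / sqrt (sin \<theta>^2 + 0^2) = sin \<theta>"
      by (simp add: power2_eq_square)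
  qed
  then show ?thesis using has_integral_sin_0_pi_half by (simp add: integral_unique)
qed

lemma phi1_le: assumes "0 < s" shows "phi1 s \<le> pi / (4 * s)"
proof -
  have "phi1 s \<le> integral {0..pi/2} (\<lambda>\<theta>. sin \<theta>^2 / s)"
    unfolding phi1_def
  proof (rule integral_le)
    show "(\<lambda>\<theta>. sin \<theta>^2 / s) integrable_on {0..pi/2}"
      using has_integral_sin_squared_0_pi_half by (intro integrable_on_divide) blast
    fix \<theta> :: real
    have "s \<le> sqrt (sin \<theta>^2 + s^2)"
      using assms real_sqrt_sum_squares_ge2[of "sin \<theta>" s] by simp
    then show "sin \<theta>^2 / sqrt (sin \<theta>^2 + s^2) \<le> sin \<theta>^2 / s"
      using assms by (intro divide_left_mono mult_pos_pos) (auto intro: add_nonneg_pos)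
  qed (rule phi1_integrand_integrable)
  also have "\<dots> = pi / (4 * s)"
    using integral_unique[OF has_integral_divide[OF has_integral_sin_squared_0_pi_half, of s]] by simp
  finally show ?thesis .
qed

lemma phi1_strict_antimono: assumes "0 \<le> s" "s < t" shows "phi1 t < phi1 s"
  unfolding phi1_def
proof (rule integral_less_real)
  fix \<theta> :: real assume "\<theta> \<in> {0<..<pi/2}"
  then have "0 < sin \<theta>"
    using pi_gt_zero by (intro sin_gt_zero) auto
  then have "0 < sin \<theta>^2"
    by simp
  moreover have "sqrt (sin \<theta>^2 + s^2) < sqrt (sin \<theta>^2 + t^2)"
    using assms by (simp add: power_strict_mono)
  ultimately show "sin \<theta>^2 / sqrt (sin \<theta>^2 + t^2) < sin \<theta>^2 / sqrt (sin \<theta>^2 + s^2)"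
    by (intro divide_strict_left_mono) (auto intro!: mult_pos_pos add_pos_nonneg)
qed (auto intro: continuous_on_phi1_integrand simp: not_le)

lemma ex1_phi1_eq: assumes "0 < a" "a \<le> 1" shows "\<exists>!s. 0 \<le> s \<and> phi1 s = a"
proof (rule ex_ex1I)
  have "phi1 (1/a) \<le> pi * a / 4"
    using phi1_le[of "1/a"] assms by simp
  also have "\<dots> < a"
    using pi_less_4 assms by simp
  finally show "\<exists>s. 0 \<le> s \<and> phi1 s = a"
    using IVT2'[of phi1 "1/a" a 0] continuous_on_phi1 assms phi1_0 by force
next
  show "s = s'" if "0 \<le> s \<and> phi1 s = a" "0 \<le> s' \<and> phi1 s' = a" for s s'
    using phi1_strict_antimono[of s s'] phi1_strict_antimono[of s' s] that
    by (cases s s' rule: linorder_cases) auto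
qed

lemma phi1_phi1_inv: assumes "0 < a" "a \<le> 1" shows "phi1 (phi1_inv a) = a"
  using theI'[OF ex1_phi1_eq[OF assms]] unfolding phi1_inv_def by blast

definition phiE :: "real \<Rightarrow> real" where
  "phiE s = integral {0..pi/2} (\<lambda>\<theta>. sqrt (sin \<theta>^2 + s^2))"

lemma phiE_integrand_integrable: "(\<lambda>\<theta>. sqrt (sin \<theta>^2 + s^2)) integrable_on {0..pi/2}"
  by (intro integrable_continuous_interval continuous_intros)

lemma phiE_nonneg: "0 \<le> phiE s"
  unfolding phiE_def by (rule integral_nonneg[OF phiE_integrand_integrable]) simp

lemma phi2_eq_phiE_add_phi1: "phi2 s = phiE s + phi1 s"
proof -
  have "(2 * u^2 + s^2) / sqrt (u^2 + s^2) = sqrt (u^2 + s^2) + u^2 / sqrt (u^2 + s^2)" for u :: real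
  proof -
    have "(2 * u^2 + s^2) / sqrt (u^2 + s^2) = (u^2 + s^2) / sqrt (u^2 + s^2) + u^2 / sqrt (u^2 + s^2)"
      by (simp add: add_divide_distrib[symmetric])
    then show ?thesis by (simp add: real_div_sqrt)
  qed
  then have "phi2 s = integral {0..pi/2}
      (\<lambda>\<theta>. sqrt (sin \<theta>^2 + s^2) + sin \<theta>^2 / sqrt (sin \<theta>^2 + s^2))"
    unfolding phi2_def by presburger
  also have "\<dots> = phiE s + phi1 s"
    unfolding phiE_def phi1_def
    by (rule integral_add[OF phiE_integrand_integrable phi1_integrand_integrable])
  finally show ?thesis .
qed

lemma phiE_less: "phiE s < pi/2 * sqrt (1/2 + s^2)"
proof -
  define c where "c = sqrt (1/2 + s^2)"
  have "0 < c" and c2: "c^2 = 1/2 + s^2"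
    unfolding c_def by (simp_all add: add_pos_nonneg)
  define h where "h \<theta> = (sin \<theta>^2 + s^2 + c^2) / (2*c) - sqrt (sin \<theta>^2 + s^2)" for \<theta>
  have h_square: "h \<theta> = (sqrt (sin \<theta>^2 + s^2) - c)^2 / (2*c)" for \<theta>
    using \<open>0 < c\<close> by (simp add: h_def field_simps power2_eq_square)
  have "sqrt (s^2) \<noteq> c"
    using c2 by auto
  then have "h 0 \<noteq> 0"
    using \<open>0 < c\<close> by (simp add: h_square)
  then have "0 < integral {0..pi/2} h"
    using \<open>0 < c\<close> unfolding h_square
    by (intro integral_pos_real[where z=0] continuous_intros) auto
  have "((\<lambda>\<theta>. (sin \<theta>^2 + s^2 + c^2) / (2*c)) has_integral (pi/4 + pi * (s^2 + c^2) / 2) / (2*c)) {0..pi/2}"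
    using has_integral_add[OF has_integral_sin_squared_0_pi_half has_integral_const_real[of "s^2 + c^2" 0 "pi/2"]]
    by (intro has_integral_divide) (simp add: add.assoc)
  moreover have "pi/4 + pi * (s^2 + c^2) / 2 = pi * c^2"
    unfolding c2 by (simp add: field_simps)
  ultimately have mean: "((\<lambda>\<theta>. (sin \<theta>^2 + s^2 + c^2) / (2*c)) has_integral pi/2 * c) {0..pi/2}"
    using \<open>0 < c\<close> by (simp add: power2_eq_square)
  have "integral {0..pi/2} h = pi/2 * c - phiE s"
    unfolding h_def phiE_def
    using integral_diff[OF has_integral_integrable[OF mean] phiE_integrand_integrable] integral_unique[OF mean]
    by simp
  then show ?thesis
    using \<open>0 < integral {0..pi/2} h\<close> unfolding c_def by simp
qed

lemma phi2_squared_bound: "phi2 s ^ 2 / (4 * (1 + s^2)) < pi^2/16 + phi1 s ^ 2 / 2"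
proof -
  define E a P where "E = phiE s" and "a = phi1 s" and "P = 1 + 2 * s^2"
  have "0 < P" unfolding P_def by (simp add: add_pos_nonneg)
  have "E^2 < (pi/2 * sqrt (1/2 + s^2))^2"
    unfolding E_def using phiE_less phiE_nonneg by (intro power_strict_mono) auto
  also have "\<dots> = pi^2 * P / 8"
    unfolding P_def by (simp add: power_mult_distrib add_pos_nonneg field_simps)
  finally have "(P + 1) * E^2 < (P + 1) * (pi^2 * P / 8)"
    using \<open>0 < P\<close> by simp
  moreover have "P * (E + a)^2 \<le> (P + 1) * E^2 + P * (P + 1) * a^2"
    using zero_le_power2[of "E - P * a"] by (simp add: power2_eq_square algebra_simps)
  moreover have "(P + 1) * (pi^2 * P / 8) + P * (P + 1) * a^2 = P * ((P + 1) * (pi^2/8 + a^2))"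
    by (simp add: algebra_simps)
  ultimately have "P * (E + a)^2 < P * ((P + 1) * (pi^2/8 + a^2))"
    by linarith
  then have "(E + a)^2 < (P + 1) * (pi^2/8 + a^2)"
    using \<open>0 < P\<close> by simp
  also have "\<dots> = (4 * (1 + s^2)) * (pi^2/16 + a^2/2)"
    unfolding P_def by (simp add: algebra_simps)
  finally have "(E + a)^2 < (4 * (1 + s^2)) * (pi^2/16 + a^2/2)" .
  then show ?thesis
    unfolding E_def a_def phi2_eq_phiE_add_phi1 by (simp add: divide_less_eq add_pos_nonneg mult.commute)
qed

theorem mainTheorem16:
  fixes \<alpha> \<delta> :: real
  assumes "0 < \<alpha>" and "\<alpha> < 1" and "0 < \<delta>"
  shows "L \<alpha> \<delta> > 4 / \<delta> * (1 - pi^2 / 16 - \<alpha>^2 / 2)"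
proof -
  define s where "s = phi1_inv \<alpha>"
  have "phi1 s = \<alpha>"
    unfolding s_def using phi1_phi1_inv assms by simp
  then have "phi2 s ^ 2 / (4 * (1 + s^2)) < pi^2/16 + \<alpha>^2/2"
    using phi2_squared_bound[of s] by simp
  then show ?thesis
    unfolding L_def s_def[symmetric] using assms(3) by (intro mult_strict_left_mono) auto
qed

end
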